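(* Consider the max-min problem: maximize $t$ over $t$, $\mathbf{E}=(E_1,\dots,E_K)$, $\boldsymbol\tau=(\tau_0,\dots,\tau_K)$ subject to $R_i(E_i,\tau_i)\ge t$ for $i=1,\dots,K$, $\sum_{i=0}^K\tau_i\le 1$, $\sum_{i=1}^KE_i\le E_{max}$, $\tau_i\ge0$ for $i=0,\dots,K$, and $0\le E_i\le E_i^b+\eta_iP_Bh_i\tau_0$ for $i=1,\dots,K$. Then the optimal policy $(t^*,\mathbf E^*,\boldsymbol\tau^* )$ satisfies $R_i(E_i^*,\tau_i^* )=t^*$ for every $i=1,\dots,K$, i.e., all users achieve the same throughput.
   Context: Fix an integer $K\ge 1$ and positive constants $E_{max}$, $P_B$, and, for $i=1,\dots,K$, $E_i^b\ge 0$, $\eta_i\in(0,1)$, $h_i>0$, $g_i>0$, $\Gamma>0$, $\sigma^2>0$. Let $\alpha_i = g_i/(\Gamma\sigma^2)$. For $E_i\ge 0$, $\tau_i\ge 0$ define $R_i(E_i,\tau_i)=\tau_i\log_2\!\left(1+\alpha_i E_i/\tau_i\right)$ for $\tau_i>0$ and $R_i(E_i,0)=0$. *)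

theory Defs
  imports Complex_Main
begin

definition rate :: "real \<Rightarrow> real \<Rightarrow> real \<Rightarrow> real \<Rightarrow> real \<Rightarrow> real" where
  "rate g Gamma sigma2 E tau =
     (if tau > 0 then tau * log 2 (1 + (g / (Gamma * sigma2)) * E / tau) else 0)"

definition feasible ::
  "nat \<Rightarrow> real \<Rightarrow> real \<Rightarrow> (nat \<Rightarrow> real) \<Rightarrow> (nat \<Rightarrow> real) \<Rightarrow> (nat \<Rightarrow> real)
   \<Rightarrow> (nat \<Rightarrow> real) \<Rightarrow> real \<Rightarrow> real
   \<Rightarrow> real \<Rightarrow> (nat \<Rightarrow> real) \<Rightarrow> (nat \<Rightarrow> real) \<Rightarrow> bool" where
  "feasible K Emax PB Eb eta h g Gamma sigma2 t E tau \<longleftrightarrow>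
     (\<forall>i\<in>{1..K}. rate (g i) Gamma sigma2 (E i) (tau i) \<ge> t) \<and>
     (\<Sum>i=0..K. tau i) \<le> 1 \<and>
     (\<Sum>i=1..K. E i) \<le> Emax \<and>
     (\<forall>i\<in>{0..K}. tau i \<ge> 0) \<and>
     (\<forall>i\<in>{1..K}. 0 \<le> E i \<and> E i \<le> Eb i + eta i * PB * h i * tau 0)"

definition optimal ::
  "nat \<Rightarrow> real \<Rightarrow> real \<Rightarrow> (nat \<Rightarrow> real) \<Rightarrow> (nat \<Rightarrow> real) \<Rightarrow> (nat \<Rightarrow> real)
   \<Rightarrow> (nat \<Rightarrow> real) \<Rightarrow> real \<Rightarrow> real
   \<Rightarrow> real \<Rightarrow> (nat \<Rightarrow> real) \<Rightarrow> (nat \<Rightarrow> real) \<Rightarrow> bool" where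
  "optimal K Emax PB Eb eta h g Gamma sigma2 t E tau \<longleftrightarrow>
     feasible K Emax PB Eb eta h g Gamma sigma2 t E tau \<and>
     (\<forall>t' E' tau'. feasible K Emax PB Eb eta h g Gamma sigma2 t' E' tau' \<longrightarrow> t' \<le> t)"

end

theory Submission imports Defs begin

text \<open>If some user's rate exceeds the optimal value t, shrink that user's transmission time by a
  factor c < 1 (losing at most a factor c of its rate, which still exceeds t) and share the freed
  time among the other users, whose rates are strictly increasing in time. Then every rate is
  strictly above t, and the minimum of the rates is a feasible value larger than t. That t > 0,
  needed for the other users to have positive time and energy, follows from an explicit feasible
  point with positive rates.\<close>

lemma mult_ln_one_plus_divide_strict_mono:
  fixes b s s' :: real
  assumes "b > 0" and "0 < s" and "s < s'"
  shows "s * ln (1 + b / s) < s' * ln (1 + b / s')"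
proof -
  define A where "A = 1 + b / s'"
  define B where "B = 1 + b / s"
  have "A > 1" "B > 0"
    using assms by (simp_all add: A_def B_def add_pos_pos)
  have ln_A: "(A - 1) / A < ln A"
    using ln_diff_less[of 1 A] \<open>A > 1\<close> by (simp add: diff_divide_distrib)
  have ln_B: "ln B - ln A \<le> (B - A) / A"
    using ln_diff_le[of B A] \<open>A > 1\<close> \<open>B > 0\<close> by simp
  have "s * (B - A) = (s' - s) * (A - 1)"
    using assms by (simp add: A_def B_def field_simps)
  then have key: "s * ((B - A) / A) = (s' - s) * ((A - 1) / A)"
    by (simp add: field_simps)
  have "s * ln B \<le> s * ln A + s * ((B - A) / A)"
    using mult_left_mono[OF ln_B, of s] assms by (simp add: algebra_simps)
  also have "\<dots> < s * ln A + (s' - s) * ln A"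
    unfolding key using mult_strict_left_mono[OF ln_A, of "s' - s"] assms by simp
  finally show ?thesis
    by (simp add: A_def B_def algebra_simps)
qed

lemma rate_pos:
  assumes "a > 0" "Gamma > 0" "sigma2 > 0" "E > 0" "s > 0"
  shows "rate a Gamma sigma2 E s > 0"
proof -
  have "1 < 1 + a / (Gamma * sigma2) * E / s"
    using assms by simp
  then have "0 < log 2 (1 + a / (Gamma * sigma2) * E / s)"
    by simp
  then show ?thesis
    using assms by (simp add: rate_def)
qed

lemma rate_pos_imp:
  assumes "rate a Gamma sigma2 E s > 0" and "E \<ge> 0"
  shows "s > 0" and "E > 0"
  using assms by (cases "s > 0"; cases "E = 0"; auto simp: rate_def)+

lemma rate_strict_mono_time:
  assumes "a > 0" "Gamma > 0" "sigma2 > 0" "E > 0" "0 < s" "s < s'"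
  shows "rate a Gamma sigma2 E s < rate a Gamma sigma2 E s'"
proof -
  have "a / (Gamma * sigma2) * E > 0"
    using assms by simp
  from mult_ln_one_plus_divide_strict_mono[OF this assms(5,6)]
  show ?thesis
    using assms by (simp add: rate_def log_def divide_strict_right_mono)
qed

lemma rate_scale_time:
  assumes "a > 0" "Gamma > 0" "sigma2 > 0" "E \<ge> 0" "0 < s" "0 < c" "c \<le> 1"
  shows "c * rate a Gamma sigma2 E s \<le> rate a Gamma sigma2 E (c * s)"
proof -
  define b where "b = a / (Gamma * sigma2) * E"
  have "b \<ge> 0"
    using assms by (simp add: b_def)
  then have "b / s \<le> b / (c * s)"
    using assms by (simp add: divide_left_mono mult_le_cancel_right1)
  moreover have "1 + b / s > 0"
    using \<open>b \<ge> 0\<close> assms by (simp add: add_pos_nonneg)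
  ultimately have "log 2 (1 + b / s) \<le> log 2 (1 + b / (c * s))"
    by simp
  then have "c * s * log 2 (1 + b / s) \<le> c * s * log 2 (1 + b / (c * s))"
    using assms by (simp add: mult_left_mono)
  then show ?thesis
    using assms by (simp add: rate_def b_def mult.assoc)
qed

definition resource_feasible ::
  "nat \<Rightarrow> real \<Rightarrow> real \<Rightarrow> (nat \<Rightarrow> real) \<Rightarrow> (nat \<Rightarrow> real) \<Rightarrow> (nat \<Rightarrow> real)
   \<Rightarrow> (nat \<Rightarrow> real) \<Rightarrow> (nat \<Rightarrow> real) \<Rightarrow> bool" where
  "resource_feasible K Emax PB Eb eta h E tau \<longleftrightarrow>
     (\<Sum>i=0..K. tau i) \<le> 1 \<and>
     (\<Sum>i=1..K. E i) \<le> Emax \<and>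
     (\<forall>i\<in>{0..K}. tau i \<ge> 0) \<and>
     (\<forall>i\<in>{1..K}. 0 \<le> E i \<and> E i \<le> Eb i + eta i * PB * h i * tau 0)"

lemma feasible_iff_resource_feasible:
  "feasible K Emax PB Eb eta h g Gamma sigma2 t E tau \<longleftrightarrow>
     resource_feasible K Emax PB Eb eta h E tau \<and>
     (\<forall>i\<in>{1..K}. t \<le> rate (g i) Gamma sigma2 (E i) (tau i))"
  unfolding feasible_def resource_feasible_def by auto

lemma feasible_above_if_rates_above:
  assumes "K \<ge> 1" and "resource_feasible K Emax PB Eb eta h E tau"
    and "\<forall>i\<in>{1..K}. t < rate (g i) Gamma sigma2 (E i) (tau i)"
  obtains t' where "t < t'" and "feasible K Emax PB Eb eta h g Gamma sigma2 t' E tau"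
proof
  let ?t' = "Min ((\<lambda>i. rate (g i) Gamma sigma2 (E i) (tau i)) ` {1..K})"
  show "t < ?t'"
    using assms by (subst Min_gr_iff) auto
  show "feasible K Emax PB Eb eta h g Gamma sigma2 ?t' E tau"
    using assms(2) by (simp add: feasible_iff_resource_feasible)
qed

lemma resource_feasible_uniform_split:
  assumes "K \<ge> 1" and "Emax \<ge> 0" and "PB \<ge> 0"
    and "\<forall>i\<in>{1..K}. Eb i \<ge> 0 \<and> eta i \<ge> 0 \<and> h i \<ge> 0"
  shows "resource_feasible K Emax PB Eb eta h
           (\<lambda>i. min (Emax / K) (eta i * PB * h i / 2))
           (\<lambda>i. if i = 0 then 1 / 2 else 1 / (2 * real K))"
proof -
  have "(\<Sum>i=0..K. (if i = 0 then 1 / 2 else 1 / (2 * real K))) = 1 / 2 + (\<Sum>i=1..K. 1 / (2 * real K))"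
    by (simp add: sum.atLeast_Suc_atMost)
  also have "\<dots> = 1"
    using assms(1) by simp
  finally have time: "(\<Sum>i=0..K. (if i = 0 then 1 / 2 else 1 / (2 * real K))) \<le> 1"
    by simp
  have "(\<Sum>i=1..K. min (Emax / K) (eta i * PB * h i / 2)) \<le> (\<Sum>i=1..K. Emax / K)"
    by (rule sum_mono) simp
  also have "\<dots> = Emax"
    using assms(1) by simp
  finally show ?thesis
    unfolding resource_feasible_def using time assms by (auto simp: min_le_iff_disj)
qed

lemma optimal_value_pos:
  assumes "K \<ge> 1" "Emax > 0" "PB > 0" "Gamma > 0" "sigma2 > 0"
    and "\<forall>i\<in>{1..K}. Eb i \<ge> 0 \<and> 0 < eta i \<and> h i > 0 \<and> g i > 0"
    and "optimal K Emax PB Eb eta h g Gamma sigma2 t E tau"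
  shows "t > 0"
proof -
  define E0 where "E0 = (\<lambda>i. min (Emax / K) (eta i * PB * h i / 2))"
  define tau0 where "tau0 = (\<lambda>i::nat. if i = 0 then 1 / 2 else 1 / (2 * real K))"
  have "resource_feasible K Emax PB Eb eta h E0 tau0"
    unfolding E0_def tau0_def using assms(1-3,6)
    by (intro resource_feasible_uniform_split) auto
  moreover have "\<forall>i\<in>{1..K}. 0 < rate (g i) Gamma sigma2 (E0 i) (tau0 i)"
    using assms by (auto simp: E0_def tau0_def intro!: rate_pos)
  ultimately obtain t' where "0 < t'" "feasible K Emax PB Eb eta h g Gamma sigma2 t' E0 tau0"
    using feasible_above_if_rates_above assms(1) by blast
  with assms(7) show ?thesis
    unfolding optimal_def by fastforce
qed

lemma resource_feasible_reallocate_time: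
  assumes "resource_feasible K Emax PB Eb eta h E tau"
    and "i \<in> {1..K}" and "0 < c" "c < 1"
  defines "d \<equiv> (1 - c) * tau i / (real K + 1)" \<comment> \<open>K + 1 overcounts the receiving users, leaving slack\<close>
  shows "resource_feasible K Emax PB Eb eta h E
           (\<lambda>j. if j = i then c * tau i else if j \<in> {1..K} then tau j + d else tau j)"
    (is "resource_feasible _ _ _ _ _ _ _ ?tau'")
proof -
  have tau: "(\<Sum>j=0..K. tau j) \<le> 1" "\<forall>j\<in>{0..K}. tau j \<ge> 0"
    using assms(1) by (simp_all add: resource_feasible_def)
  have "d \<ge> 0"
    using assms tau(2) by (simp add: d_def)
  have "(real K + 1) * d = (1 - c) * tau i"
    by (simp add: d_def)
  have "(\<Sum>j=0..K. ?tau' j) \<le> (\<Sum>j=0..K. tau j + d - (if j = i then (1 - c) * tau i + d else 0))"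
    by (rule sum_mono) (use \<open>d \<ge> 0\<close> in \<open>auto simp: algebra_simps\<close>)
  also have "\<dots> = (\<Sum>j=0..K. tau j) + (real K + 1) * d - ((1 - c) * tau i + d)"
    using assms(2) by (simp add: sum_subtractf sum.distrib)
  also have "\<dots> = (\<Sum>j=0..K. tau j) - d"
    using \<open>(real K + 1) * d = (1 - c) * tau i\<close> by linarith
  finally have "(\<Sum>j=0..K. ?tau' j) \<le> 1"
    using tau(1) \<open>d \<ge> 0\<close> by linarith
  moreover have "?tau' 0 = tau 0"
    using assms(2) by simp
  ultimately show ?thesis
    using assms(1-4) \<open>d \<ge> 0\<close> by (auto simp: resource_feasible_def)
qed

lemma reallocate_time_rates_above:
  fixes g :: "nat \<Rightarrow> real"
  assumes "Gamma > 0" "sigma2 > 0" "\<forall>j\<in>{1..K}. g j > 0"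
    and res: "resource_feasible K Emax PB Eb eta h E tau"
    and "t > 0" and rates: "\<forall>j\<in>{1..K}. t \<le> rate (g j) Gamma sigma2 (E j) (tau j)"
    and i: "i \<in> {1..K}" and "t < rate (g i) Gamma sigma2 (E i) (tau i)"
  obtains tau' where "resource_feasible K Emax PB Eb eta h E tau'"
    and "\<forall>j\<in>{1..K}. t < rate (g j) Gamma sigma2 (E j) (tau' j)"
proof -
  let ?R = "\<lambda>j s. rate (g j) Gamma sigma2 (E j) s"
  have pos: "tau j > 0" "E j > 0" if "j \<in> {1..K}" for j
  proof -
    have "?R j (tau j) > 0"
      using bspec[OF rates that] \<open>t > 0\<close> by linarith
    moreover have "E j \<ge> 0"
      using res that by (simp add: resource_feasible_def)
    ultimately show "tau j > 0" "E j > 0"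
      by (fact rate_pos_imp)+
  qed
  define c where "c = (1 + t / ?R i (tau i)) / 2"
  have "0 < c" "c < 1" "t < c * ?R i (tau i)"
    using \<open>t > 0\<close> \<open>t < ?R i (tau i)\<close> by (auto simp: c_def field_simps)
  define d where "d = (1 - c) * tau i / (real K + 1)"
  let ?tau' = "\<lambda>j. if j = i then c * tau i else if j \<in> {1..K} then tau j + d else tau j"
  have "d > 0"
    using \<open>c < 1\<close> pos(1)[OF i] by (simp add: d_def)
  have "c * ?R i (tau i) \<le> ?R i (c * tau i)"
    by (rule rate_scale_time) (use assms(1-3) i pos[OF i] \<open>0 < c\<close> \<open>c < 1\<close> in auto)
  moreover have "?R j (tau j) < ?R j (tau j + d)" if "j \<in> {1..K}" for j
    by (rule rate_strict_mono_time) (use assms(1-3) that pos[OF that] \<open>d > 0\<close> in auto)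
  ultimately have "\<forall>j\<in>{1..K}. t < ?R j (?tau' j)"
    using \<open>t < c * ?R i (tau i)\<close> rates by fastforce
  moreover have "resource_feasible K Emax PB Eb eta h E ?tau'"
    unfolding d_def by (rule resource_feasible_reallocate_time[OF res i \<open>0 < c\<close> \<open>c < 1\<close>])
  ultimately show ?thesis
    using that by blast
qed

theorem theorem5:
  fixes K :: nat and Emax PB Gamma sigma2 :: real
    and Eb eta h g :: "nat \<Rightarrow> real"
    and t :: real and E tau :: "nat \<Rightarrow> real"
  assumes "K \<ge> 1" and "Emax > 0" and "PB > 0" and "Gamma > 0" and "sigma2 > 0"
    and "\<forall>i\<in>{1..K}. Eb i \<ge> 0 \<and> 0 < eta i \<and> eta i < 1 \<and> h i > 0 \<and> g i > 0"
    and "optimal K Emax PB Eb eta h g Gamma sigma2 t E tau"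
  shows "\<forall>i\<in>{1..K}. rate (g i) Gamma sigma2 (E i) (tau i) = t"
proof (rule ccontr)
  have params: "\<forall>i\<in>{1..K}. Eb i \<ge> 0 \<and> 0 < eta i \<and> h i > 0 \<and> g i > 0"
    using assms(6) by auto
  from optimal_value_pos[OF assms(1-5) params assms(7)] have "t > 0" .
  have res: "resource_feasible K Emax PB Eb eta h E tau"
    and rates: "\<forall>j\<in>{1..K}. t \<le> rate (g j) Gamma sigma2 (E j) (tau j)"
    using assms(7) by (simp_all add: optimal_def feasible_iff_resource_feasible)
  assume "\<not> (\<forall>i\<in>{1..K}. rate (g i) Gamma sigma2 (E i) (tau i) = t)"
  then obtain i where "i \<in> {1..K}" and "t < rate (g i) Gamma sigma2 (E i) (tau i)"
    using rates by fastforce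
  then obtain tau' where "resource_feasible K Emax PB Eb eta h E tau'"
    and "\<forall>j\<in>{1..K}. t < rate (g j) Gamma sigma2 (E j) (tau' j)"
    using reallocate_time_rates_above[OF assms(4,5) _ res \<open>t > 0\<close> rates] params by blast
  then obtain t' where "t < t'" "feasible K Emax PB Eb eta h g Gamma sigma2 t' E tau'"
    using feasible_above_if_rates_above assms(1) by blast
  with assms(7) show False
    unfolding optimal_def by fastforce
qed

end
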